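(* Let $F(X;\theta)=f_L\circ\cdots\circ f_1(X)$ be a convolutional network with parameters $\theta=\{W^1,\dots,W^L,B^1,\dots,B^L\}$, and let $\omega_t=f_L\circ\cdots\circ f_t$ and $\alpha_t=f_t\circ\cdots\circ f_1$ for $t=1,\dots,L$, with $\omega_{L+1}$ and $\alpha_0$ the identity maps. Let $V,X\in\mathbb{R}^{n_1\times\ell_1}\otimes\mathbb{R}^{m_1}$, $t\in\{1,\dots,L\}$, and $X^t=\alpha_{t-1}(X)$. Then for a parameter $\theta^t\in\{W^t,B^t\}$, $$\big(\nabla_{\theta^t}\mathrm{D}F(X;\theta)\llcorner V\big)^*=\nabla^*_{\theta^t}f_t(X^t)\cdot\Big((\mathrm{D}\alpha_t(X)\cdot V)\lrcorner\mathrm{D}^2\omega_{t+1}(X^{t+1})\Big)^*+\Big((\mathrm{D}\alpha_{t-1}(X)\cdot V)\lrcorner\mathrm{D}\nabla_{\theta^t}f_t(X^t)\Big)^*\cdot\mathrm{D}^*\omega_{t+1}(X^{t+1}).$$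
   Context: All spaces are finite-dimensional real inner product spaces with tensor products carrying the induced inner product; $L^*$ denotes the adjoint. For a map $g(x;\theta)$: $\mathrm{D}g$ is the derivative in the state $x$ and $\nabla_\theta g$ the derivative in the parameter $\theta$ (both linear maps), $\mathrm{D}^*g,\nabla^*_\theta g$ their adjoints; $\mathrm{D}^2g(x)$ is the bilinear map $(e,\bar e)\mapsto\frac{d}{dt}\mathrm{D}g(x+te)\cdot\bar e|_{t=0}$; $\mathrm{D}\nabla_\theta g(x;\theta)$ is the bilinear map $(e,u)\mapsto\frac{d}{dt}\nabla_\theta g(x+te;\theta)\cdot u|_{t=0}$; $\nabla_\theta\mathrm{D}g(x;\theta)$ is the bilinear map $(u,e)\mapsto\frac{d}{dt}\mathrm{D}g(x;\theta+tu)\cdot e|_{t=0}$. For a bilinear $B(\cdot,\cdot)$, $y\lrcorner B$ is the linear map $e\mapsto B(y,e)$ and $B\llcorner y$ is $e\mapsto B(e,y)$. The network: for $t=1,\dots,L$, $f_t:\mathbb{R}^{n_t\times\ell_t}\otimes\mathbb{R}^{m_t}\to\mathbb{R}^{n_{t+1}\times\ell_{t+1}}\otimes\mathbb{R}^{m_{t+1}}$ is $f_t(X^t)=\Psi_t\big(S_t(C^t(W^t,X^t)+B^t)\big)$ with parameters $W^t\in\mathbb{R}^{p_t\times q_t}\otimes\mathbb{R}^{m_{t+1}}$, $B^t\in\mathbb{R}^{\bar n_t\times\bar\ell_t}\otimes\mathbb{R}^{m_{t+1}}$, where (with orthonormal bases $\{e_i\}$ of $\mathbb{R}^{m_t}$,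 $\{\tilde e_a\}$ of $\mathbb{R}^{m_{t+1}}$, $\{E_{jk}\}$ of $\mathbb{R}^{n_t\times\ell_t}$, $\{\bar E_{jk}\}$ of $\mathbb{R}^{\bar n_t\times\bar\ell_t}$, $\{\tilde E_{rs}\}$ of $\mathbb{R}^{p_t\times q_t}$): $C^t(W,X)=\sum_aC_a(W,X)\otimes\tilde e_a$ with $C_a(W,X)=\sum_{j=1}^{\bar n_t}\sum_{k=1}^{\bar\ell_t}\langle W_a,\Phi_{A_a}(\mathcal{K}_{1+(j-1)\Delta,1+(k-1)\Delta}(X))\rangle\bar E_{jk}$ for $W=\sum_aW_a\otimes\tilde e_a$, fixed $A_a\in\mathbb{R}^{m_t}$ and stride $\Delta\ge1$; $\mathcal{K}_{jk}(\sum_iX_i\otimes e_i)=\sum_i\kappa_{jk}(X_i)\otimes e_i$, $\kappa_{jk}(Q)=\sum_{r,s}\langle Q,E_{j+r-1,k+s-1}\rangle\tilde E_{rs}$ (dimensions such that crops are defined); $\Phi_v(\sum_iU_i\otimes e_i)=\sum_iv_iU_i$ for $v=\sum_iv_ie_i$; $S_t(\sum_aY_a\otimes\tilde e_a)=\sum_a\sigma(Y_a)\otimes\tilde e_a$ with $\sigma(Y)=\sum_{j,k}\bar\sigma_t(\langle Y,\bar E_{jk}\rangle)\bar E_{jk}$ for a twice continuously differentiable $\bar\sigma_t:\mathbb{R}\to\mathbb{R}$; and $\Psi_t(\sum_aY_a\otimes\tilde e_a)=\sum_a\psi_t(Y_a)\otimes\tilde e_a$ for a linear $\psi_t:\mathbb{R}^{\bar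 n_t\times\bar\ell_t}\to\mathbb{R}^{n_{t+1}\times\ell_{t+1}}$. In the claim, $\mathrm{D}F(X;\theta)$ is the derivative of $F$ in $X$, and $f_t$, $\omega_t$, $\alpha_t$ depend on the parameters, which are held fixed except $\theta^t$ where differentiated. *)

theory Defs
  imports "HOL-Analysis.Analysis"
begin

text \<open>A tensor X in R^{n x l} (x) R^m is stored as  X j k i = <X_i, E_jk>  for
  1 <= j <= n, 1 <= k <= l, 1 <= i <= m, and 0 outside this box.\<close>

type_synonym tensor = "nat \<Rightarrow> nat \<Rightarrow> nat \<Rightarrow> real"
type_synonym dims = "nat \<times> nat \<times> nat"

definition tbox :: "dims \<Rightarrow> tensor set" where
  "tbox d = (case d of (n, l, m) \<Rightarrow>
     {X. \<forall>j k i. X j k i \<noteq> 0 \<longrightarrow> j \<in> {1..n} \<and> k \<in> {1..l} \<and> i \<in> {1..m}})"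

definition tinner :: "dims \<Rightarrow> tensor \<Rightarrow> tensor \<Rightarrow> real" where
  "tinner d X Y = (case d of (n, l, m) \<Rightarrow>
     (\<Sum>j=1..n. \<Sum>k=1..l. \<Sum>i=1..m. X j k i * Y j k i))"

definition tadd :: "tensor \<Rightarrow> tensor \<Rightarrow> tensor" where
  "tadd X Y = (\<lambda>j k i. X j k i + Y j k i)"

definition tscale :: "real \<Rightarrow> tensor \<Rightarrow> tensor" where
  "tscale c X = (\<lambda>j k i. c * X j k i)"

definition adjoint_on :: "dims \<Rightarrow> dims \<Rightarrow> (tensor \<Rightarrow> tensor) \<Rightarrow> tensor \<Rightarrow> tensor" where
  "adjoint_on S T Lm y =
     (THE x. x \<in> tbox S \<and> (\<forall>e\<in>tbox S. tinner T (Lm e) y = tinner S e x))"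

definition Dx :: "(tensor \<Rightarrow> tensor) \<Rightarrow> tensor \<Rightarrow> tensor \<Rightarrow> tensor" where
  "Dx g x e = (\<lambda>j k i. deriv (\<lambda>s. g (tadd x (tscale s e)) j k i) 0)"

definition Dth :: "(tensor \<Rightarrow> tensor \<Rightarrow> tensor) \<Rightarrow> tensor \<Rightarrow> tensor \<Rightarrow> tensor \<Rightarrow> tensor" where
  "Dth g x \<theta> u = Dx (\<lambda>\<theta>'. g x \<theta>') \<theta> u"

definition D2 :: "(tensor \<Rightarrow> tensor) \<Rightarrow> tensor \<Rightarrow> tensor \<Rightarrow> tensor \<Rightarrow> tensor" where
  "D2 g x e ebar = Dx (\<lambda>x'. Dx g x' ebar) x e"

definition DDth :: "(tensor \<Rightarrow> tensor \<Rightarrow> tensor) \<Rightarrow> tensor \<Rightarrow> tensor \<Rightarrow> tensor \<Rightarrow> tensor \<Rightarrow> tensor" where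
  "DDth g x \<theta> e u = Dx (\<lambda>x'. Dth g x' \<theta> u) x e"

definition DthD :: "(tensor \<Rightarrow> tensor \<Rightarrow> tensor) \<Rightarrow> tensor \<Rightarrow> tensor \<Rightarrow> tensor \<Rightarrow> tensor \<Rightarrow> tensor" where
  "DthD g x \<theta> u e = Dx (\<lambda>\<theta>'. Dx (\<lambda>x'. g x' \<theta>') x e) \<theta> u"

definition contr_left :: "'a \<Rightarrow> ('a \<Rightarrow> 'b \<Rightarrow> 'c) \<Rightarrow> 'b \<Rightarrow> 'c" where
  "contr_left y Bl = (\<lambda>e. Bl y e)"

definition contr_right :: "('a \<Rightarrow> 'b \<Rightarrow> 'c) \<Rightarrow> 'b \<Rightarrow> 'a \<Rightarrow> 'c" where
  "contr_right Bl y = (\<lambda>e. Bl e y)"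

definition twice_cont_diff :: "(real \<Rightarrow> real) \<Rightarrow> bool" where
  "twice_cont_diff g \<longleftrightarrow> (\<exists>g' g''. (\<forall>x. (g has_real_derivative g' x) (at x)) \<and>
      (\<forall>x. (g' has_real_derivative g'' x) (at x)) \<and> continuous_on UNIV g'')"

text \<open>Architecture data, indexed by the layer t (dimensions of the state space of layer t are
  rows t x cols t x chans t; n_bar, l_bar, p, q, stride, A_a, sigma_bar, psi as in the paper;
  mix t a i = i-th coordinate of A_a for layer t; psi t is given by its matrix:
  psi_t(Y) j k = sum_{j',k'} psi_mat t j k j' k' * Y j' k').\<close>
record cnn_arch =
  rows :: "nat \<Rightarrow> nat"
  cols :: "nat \<Rightarrow> nat"
  chans :: "nat \<Rightarrow> nat"
  rows_bar :: "nat \<Rightarrow> nat"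
  cols_bar :: "nat \<Rightarrow> nat"
  ker_rows :: "nat \<Rightarrow> nat"
  ker_cols :: "nat \<Rightarrow> nat"
  stride :: "nat \<Rightarrow> nat"
  mix :: "nat \<Rightarrow> nat \<Rightarrow> nat \<Rightarrow> real"
  act :: "nat \<Rightarrow> real \<Rightarrow> real"
  psi_mat :: "nat \<Rightarrow> nat \<Rightarrow> nat \<Rightarrow> nat \<Rightarrow> nat \<Rightarrow> real"

definition sdims :: "cnn_arch \<Rightarrow> nat \<Rightarrow> dims" where
  "sdims N t = (rows N t, cols N t, chans N t)"

definition kappa :: "nat \<Rightarrow> nat \<Rightarrow> nat \<Rightarrow> nat \<Rightarrow> (nat \<Rightarrow> nat \<Rightarrow> real) \<Rightarrow> nat \<Rightarrow> nat \<Rightarrow> real" where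
  "kappa p q j k Q = (\<lambda>r s. if r \<in> {1..p} \<and> s \<in> {1..q} then Q (j + r - 1) (k + s - 1) else 0)"

definition Kcrop :: "nat \<Rightarrow> nat \<Rightarrow> nat \<Rightarrow> nat \<Rightarrow> tensor \<Rightarrow> tensor" where
  "Kcrop p q j k X = (\<lambda>r s i. kappa p q j k (\<lambda>a b. X a b i) r s)"

definition Phi :: "nat \<Rightarrow> (nat \<Rightarrow> real) \<Rightarrow> tensor \<Rightarrow> nat \<Rightarrow> nat \<Rightarrow> real" where
  "Phi m v U = (\<lambda>r s. \<Sum>i=1..m. v i * U r s i)"

definition mat_inner :: "nat \<Rightarrow> nat \<Rightarrow> (nat \<Rightarrow> nat \<Rightarrow> real) \<Rightarrow> (nat \<Rightarrow> nat \<Rightarrow> real) \<Rightarrow> real" where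
  "mat_inner p q P Q = (\<Sum>r=1..p. \<Sum>s=1..q. P r s * Q r s)"

definition conv :: "cnn_arch \<Rightarrow> nat \<Rightarrow> tensor \<Rightarrow> tensor \<Rightarrow> tensor" where
  "conv N t Wt X = (\<lambda>j k a.
     if j \<in> {1..rows_bar N t} \<and> k \<in> {1..cols_bar N t} \<and> a \<in> {1..chans N (Suc t)} then
       mat_inner (ker_rows N t) (ker_cols N t) (\<lambda>r s. Wt r s a)
         (Phi (chans N t) (mix N t a)
            (Kcrop (ker_rows N t) (ker_cols N t)
               (1 + (j - 1) * stride N t) (1 + (k - 1) * stride N t) X))
     else 0)"

definition Smap :: "cnn_arch \<Rightarrow> nat \<Rightarrow> tensor \<Rightarrow> tensor" where
  "Smap N t Y = (\<lambda>j k a.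
     if j \<in> {1..rows_bar N t} \<and> k \<in> {1..cols_bar N t} \<and> a \<in> {1..chans N (Suc t)}
     then act N t (Y j k a) else 0)"

definition Psimap :: "cnn_arch \<Rightarrow> nat \<Rightarrow> tensor \<Rightarrow> tensor" where
  "Psimap N t Y = (\<lambda>j k a.
     if j \<in> {1..rows N (Suc t)} \<and> k \<in> {1..cols N (Suc t)} \<and> a \<in> {1..chans N (Suc t)}
     then (\<Sum>j'=1..rows_bar N t. \<Sum>k'=1..cols_bar N t. psi_mat N t j k j' k' * Y j' k' a)
     else 0)"

definition layer :: "cnn_arch \<Rightarrow> nat \<Rightarrow> tensor \<Rightarrow> tensor \<Rightarrow> tensor \<Rightarrow> tensor" where
  "layer N t Wt Bt X = Psimap N t (Smap N t (tadd (conv N t Wt X) Bt))"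

text \<open>f_{b-1} o ... o f_a  (identity if a >= b)\<close>
definition comp_layers :: "cnn_arch \<Rightarrow> (nat \<Rightarrow> tensor) \<Rightarrow> (nat \<Rightarrow> tensor) \<Rightarrow> nat \<Rightarrow> nat \<Rightarrow> tensor \<Rightarrow> tensor" where
  "comp_layers N W B a b X = foldl (\<lambda>x s. layer N s (W s) (B s) x) X [a..<b]"

definition alpha :: "cnn_arch \<Rightarrow> (nat \<Rightarrow> tensor) \<Rightarrow> (nat \<Rightarrow> tensor) \<Rightarrow> nat \<Rightarrow> tensor \<Rightarrow> tensor" where
  "alpha N W B t = comp_layers N W B 1 (Suc t)"

definition omega :: "cnn_arch \<Rightarrow> nat \<Rightarrow> (nat \<Rightarrow> tensor) \<Rightarrow> (nat \<Rightarrow> tensor) \<Rightarrow> nat \<Rightarrow> tensor \<Rightarrow> tensor" where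
  "omega N L W B t = comp_layers N W B t (Suc L)"

definition network :: "cnn_arch \<Rightarrow> nat \<Rightarrow> (nat \<Rightarrow> tensor) \<Rightarrow> (nat \<Rightarrow> tensor) \<Rightarrow> tensor \<Rightarrow> tensor" where
  "network N L W B = comp_layers N W B 1 (Suc L)"

definition theta_val :: "(nat \<Rightarrow> tensor) \<Rightarrow> (nat \<Rightarrow> tensor) \<Rightarrow> nat \<Rightarrow> bool \<Rightarrow> tensor" where
  "theta_val W B t isW = (if isW then W t else B t)"

definition theta_dims :: "cnn_arch \<Rightarrow> nat \<Rightarrow> bool \<Rightarrow> dims" where
  "theta_dims N t isW = (if isW then (ker_rows N t, ker_cols N t, chans N (Suc t))
                         else (rows_bar N t, cols_bar N t, chans N (Suc t)))"

definition network_param :: "cnn_arch \<Rightarrow> nat \<Rightarrow> (nat \<Rightarrow> tensor) \<Rightarrow> (nat \<Rightarrow> tensor) \<Rightarrow> nat \<Rightarrow> bool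
    \<Rightarrow> tensor \<Rightarrow> tensor \<Rightarrow> tensor" where
  "network_param N L W B t isW = (\<lambda>X \<theta>.
     if isW then network N L (W(t := \<theta>)) B X else network N L W (B(t := \<theta>)) X)"

definition layer_param :: "cnn_arch \<Rightarrow> (nat \<Rightarrow> tensor) \<Rightarrow> (nat \<Rightarrow> tensor) \<Rightarrow> nat \<Rightarrow> bool
    \<Rightarrow> tensor \<Rightarrow> tensor \<Rightarrow> tensor" where
  "layer_param N W B t isW = (\<lambda>X \<theta>.
     if isW then layer N t \<theta> (B t) X else layer N t (W t) \<theta> X)"

end

theory Submission
  imports Defs
begin

text \<open>Only f_t depends on \<theta>^t, so F(x; \<theta>) = \<omega>_{t+1}(f_t(\<alpha>_{t-1}(x); \<theta>)). Differentiating in x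
  along V and then in \<theta> along u, the chain and product rules together with the symmetry of
  second derivatives give
    \<nabla>_\<theta>DF(X)(u, V) = D^2\<omega>_{t+1}(X^{t+1})(D\<alpha>_t(X) V, \<nabla>_\<theta>f_t(X^t) u)
                  + D\<omega>_{t+1}(X^{t+1}) (D\<nabla>_\<theta>f_t(X^t)(D\<alpha>_{t-1}(X) V, u)).
  Both terms are compositions of maps linear in u, so (A + B)^* = A^* + B^* and (A B)^* = B^* A^*
  yield the claim. Derivatives are obtained from chain rules along differentiable curves, which is
  all the directional derivatives of the statement need.\<close>

section \<open>Tensor arithmetic and adjoints\<close>

definition tzero :: tensor where
  "tzero = (\<lambda>j k i. 0)"

lemma tadd_assoc: "tadd (tadd a b) c = tadd a (tadd b c)"
  by (simp add: tadd_def algebra_simps)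

lemma tadd_commute: "tadd a b = tadd b a"
  by (simp add: tadd_def algebra_simps)

lemma tadd_left_commute: "tadd a (tadd b c) = tadd b (tadd a c)"
  by (simp add: tadd_def algebra_simps)

lemmas tadd_ac = tadd_assoc tadd_commute tadd_left_commute

lemma tadd_tzero [simp]: "tadd a tzero = a" "tadd tzero a = a"
  by (simp_all add: tadd_def tzero_def)

lemma tscale_tzero [simp]: "tscale c tzero = tzero" "tscale 0 a = tzero"
  by (simp_all add: tscale_def tzero_def)

lemma tscale_tadd: "tscale c (tadd a b) = tadd (tscale c a) (tscale c b)"
  by (simp add: tscale_def tadd_def algebra_simps)

lemma tinner_tadd_left: "tinner d (tadd a b) y = tinner d a y + tinner d b y"
  by (simp add: tinner_def tadd_def distrib_right sum.distrib split: prod.split)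

lemma tinner_tadd_right: "tinner d y (tadd a b) = tinner d y a + tinner d y b"
  by (simp add: tinner_def tadd_def distrib_left sum.distrib split: prod.split)

lemma tinner_tscale_left: "tinner d (tscale c a) y = c * tinner d a y"
  by (simp add: tinner_def tscale_def sum_distrib_left mult.assoc split: prod.split)

lemma tinner_eq_sum_box:
  "tinner (n, l, m) a b = (\<Sum>(j, k, i)\<in>{1..n} \<times> {1..l} \<times> {1..m}. a j k i * b j k i)"
  unfolding tinner_def by (simp add: sum.cartesian_product)

lemma tbox_outside_zero:
  "x \<in> tbox (n, l, m) \<Longrightarrow> (j, k, i) \<notin> {1..n} \<times> {1..l} \<times> {1..m} \<Longrightarrow> x j k i = 0"
  unfolding tbox_def by auto

lemma tadd_in_tbox: "a \<in> tbox d \<Longrightarrow> b \<in> tbox d \<Longrightarrow> tadd a b \<in> tbox d"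
  by (cases d) (simp add: tbox_def tadd_def, metis add.right_neutral)

definition tlinear :: "(tensor \<Rightarrow> tensor) \<Rightarrow> bool" where
  "tlinear L \<longleftrightarrow> (\<forall>a b. L (tadd a b) = tadd (L a) (L b)) \<and> (\<forall>c a. L (tscale c a) = tscale c (L a))"

lemma tlinearI:
  "(\<And>a b. L (tadd a b) = tadd (L a) (L b)) \<Longrightarrow> (\<And>c a. L (tscale c a) = tscale c (L a)) \<Longrightarrow> tlinear L"
  by (simp add: tlinear_def)

lemma tlinear_id: "tlinear (\<lambda>u. u)"
  by (simp add: tlinear_def)

lemma tlinear_zero: "tlinear (\<lambda>u. tzero)"
  by (simp add: tlinear_def)

lemma tlinear_tadd: "tlinear L \<Longrightarrow> L (tadd a b) = tadd (L a) (L b)"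
  by (simp add: tlinear_def)

lemma tlinear_tscale: "tlinear L \<Longrightarrow> L (tscale c a) = tscale c (L a)"
  by (simp add: tlinear_def)

lemma tlinear_tzero: "tlinear L \<Longrightarrow> L tzero = tzero"
  using tlinear_tscale[of L 0 tzero] by simp

lemma tlinear_comp: "tlinear F \<Longrightarrow> tlinear G \<Longrightarrow> tlinear (\<lambda>e. F (G e))"
  by (simp add: tlinear_def)

lemma tlinear_tadd_fun: "tlinear F \<Longrightarrow> tlinear G \<Longrightarrow> tlinear (\<lambda>e. tadd (F e) (G e))"
  by (simp add: tlinear_def tscale_tadd tadd_ac)

definition tunit :: "nat \<Rightarrow> nat \<Rightarrow> nat \<Rightarrow> tensor" where
  "tunit j k i = (\<lambda>a b c. if (a, b, c) = (j, k, i) then 1 else 0)"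

lemma tunit_in_tbox: "(j, k, i) \<in> {1..n} \<times> {1..l} \<times> {1..m} \<Longrightarrow> tunit j k i \<in> tbox (n, l, m)"
  by (auto simp: tunit_def tbox_def)

lemma tinner_tunit:
  assumes "(j, k, i) \<in> {1..n} \<times> {1..l} \<times> {1..m}"
  shows "tinner (n, l, m) (tunit j k i) z = z j k i"
proof -
  have "tinner (n, l, m) (tunit j k i) z
      = (\<Sum>p\<in>{1..n} \<times> {1..l} \<times> {1..m}. if p = (j, k, i) then z j k i else 0)"
    unfolding tinner_eq_sum_box by (rule sum.cong) (auto simp: tunit_def split: if_splits)
  then show ?thesis using assms by simp
qed

lemma tbox_tunit_expansion:
  assumes "e \<in> tbox (n, l, m)"
  shows "e = (\<lambda>a b c. \<Sum>p\<in>{1..n} \<times> {1..l} \<times> {1..m}.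
                 (case p of (j, k, i) \<Rightarrow> tscale (e j k i) (tunit j k i)) a b c)"
proof (intro ext)
  fix a b c
  have "e a b c = (\<Sum>p\<in>{1..n} \<times> {1..l} \<times> {1..m}. if p = (a, b, c) then e a b c else 0)"
    using tbox_outside_zero[OF assms, of a b c] by auto
  also have "\<dots> = (\<Sum>p\<in>{1..n} \<times> {1..l} \<times> {1..m}.
                     (case p of (j, k, i) \<Rightarrow> tscale (e j k i) (tunit j k i)) a b c)"
    by (rule sum.cong) (auto simp: tscale_def tunit_def split: if_splits)
  finally show "e a b c = \<dots>" .
qed

lemma adjoint_on_eqI:
  assumes "x \<in> tbox S" "\<forall>e\<in>tbox S. tinner T (L e) y = tinner S e x"
  shows "adjoint_on S T L y = x"
  unfolding adjoint_on_def
proof (rule the_equality)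
  show "x \<in> tbox S \<and> (\<forall>e\<in>tbox S. tinner T (L e) y = tinner S e x)"
    using assms by blast
next
  fix x' assume x': "x' \<in> tbox S \<and> (\<forall>e\<in>tbox S. tinner T (L e) y = tinner S e x')"
  obtain n l m where S: "S = (n, l, m)" by (cases S)
  show "x' = x"
  proof (intro ext)
    fix j k i
    show "x' j k i = x j k i"
    proof (cases "(j, k, i) \<in> {1..n} \<times> {1..l} \<times> {1..m}")
      case True
      then have "tinner S (tunit j k i) x' = tinner S (tunit j k i) x"
        using x' assms(2) tunit_in_tbox unfolding S by metis
      then show ?thesis using True by (simp add: S tinner_tunit)
    next
      case False
      then show ?thesis using x' assms(1) tbox_outside_zero unfolding S by metis
    qed
  qed
qed

lemma ex_adjoint:
  assumes L: "tlinear L"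
  shows "\<exists>x\<in>tbox S. \<forall>e\<in>tbox S. tinner T (L e) y = tinner S e x"
proof -
  obtain n l m where S: "S = (n, l, m)" by (cases S)
  define P where "P = {1..n} \<times> {1..l} \<times> {1..m}"
  define ell where "ell e = tinner T (L e) y" for e
  have ell_sum: "ell (\<lambda>a b c. \<Sum>p\<in>Q. f p a b c) = (\<Sum>p\<in>Q. ell (f p))"
    if "finite Q" for Q :: "(nat \<times> nat \<times> nat) set" and f
    using that
  proof (induction Q rule: finite_induct)
    case empty
    have "tinner T tzero y = 0" by (simp add: tinner_def tzero_def split: prod.split)
    then show ?case using tlinear_tzero[OF L] by (simp add: ell_def tzero_def)
  next
    case (insert p Q)
    have "(\<lambda>a b c. \<Sum>p\<in>insert p Q. f p a b c) = tadd (f p) (\<lambda>a b c. \<Sum>p\<in>Q. f p a b c)"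
      using insert by (simp add: tadd_def)
    then show ?case
      using insert by (simp add: ell_def tlinear_tadd[OF L] tinner_tadd_left)
  qed
  define x where "x j k i = (if (j, k, i) \<in> P then ell (tunit j k i) else 0)" for j k i
  have "ell e = tinner S e x" if e: "e \<in> tbox S" for e
  proof -
    have "ell e = (\<Sum>p\<in>P. ell (case p of (j, k, i) \<Rightarrow> tscale (e j k i) (tunit j k i)))"
      by (subst tbox_tunit_expansion[OF e[unfolded S]]) (simp add: ell_sum P_def)
    also have "\<dots> = (\<Sum>(j, k, i)\<in>P. e j k i * x j k i)"
      by (rule sum.cong) (auto simp: x_def ell_def tlinear_tscale[OF L] tinner_tscale_left)
    also have "\<dots> = tinner S e x" by (simp add: S P_def tinner_eq_sum_box)
    finally show ?thesis .
  qed
  moreover have "x \<in> tbox S" by (auto simp: x_def S P_def tbox_def)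
  ultimately show ?thesis unfolding ell_def by blast
qed

lemma adjoint_on_in_tbox: "tlinear L \<Longrightarrow> adjoint_on S T L y \<in> tbox S"
  using ex_adjoint adjoint_on_eqI by metis

lemma tinner_adjoint_on:
  "tlinear L \<Longrightarrow> e \<in> tbox S \<Longrightarrow> tinner T (L e) y = tinner S e (adjoint_on S T L y)"
  using ex_adjoint adjoint_on_eqI by metis

lemma adjoint_on_tadd:
  assumes "tlinear F" "tlinear G"
  shows "adjoint_on S T (\<lambda>u. tadd (F u) (G u)) y = tadd (adjoint_on S T F y) (adjoint_on S T G y)"
  using assms
  by (intro adjoint_on_eqI)
     (simp_all add: tadd_in_tbox adjoint_on_in_tbox tinner_tadd_left tinner_tadd_right tinner_adjoint_on)

lemma adjoint_on_comp:
  assumes "tlinear F" "tlinear G" "\<And>u. u \<in> tbox S \<Longrightarrow> G u \<in> tbox U"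
  shows "adjoint_on S T (\<lambda>u. F (G u)) y = adjoint_on S U G (adjoint_on U T F y)"
proof (intro adjoint_on_eqI ballI)
  fix e assume "e \<in> tbox S"
  then have "tinner T (F (G e)) y = tinner U (G e) (adjoint_on U T F y)"
    using assms(1) assms(3) by (intro tinner_adjoint_on)
  also have "\<dots> = tinner S e (adjoint_on S U G (adjoint_on U T F y))"
    using assms(2) \<open>e \<in> tbox S\<close> by (rule tinner_adjoint_on)
  finally show "tinner T (F (G e)) y = \<dots>" .
qed (simp add: assms adjoint_on_in_tbox)

section \<open>Derivatives along curves\<close>

definition has_tderiv :: "(real \<Rightarrow> tensor) \<Rightarrow> (real \<Rightarrow> tensor) \<Rightarrow> bool" where
  "has_tderiv \<phi> \<phi>' \<longleftrightarrow> (\<forall>q j k i. ((\<lambda>q. \<phi> q j k i) has_real_derivative \<phi>' q j k i) (at q))"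

lemma has_tderiv_cong: "has_tderiv \<phi> \<phi>' \<Longrightarrow> (\<And>q. \<phi>' q = \<psi>' q) \<Longrightarrow> has_tderiv \<phi> \<psi>'"
  by (simp add: has_tderiv_def)

lemma has_tderiv_const: "has_tderiv (\<lambda>q. c) (\<lambda>q. tzero)"
  by (simp add: has_tderiv_def tzero_def)

lemma has_tderiv_line: "has_tderiv (\<lambda>q. tadd x (tscale q e)) (\<lambda>q. e)"
  unfolding has_tderiv_def tadd_def tscale_def by (auto intro!: derivative_eq_intros)

lemma has_tderiv_tadd:
  "has_tderiv \<phi> \<phi>' \<Longrightarrow> has_tderiv \<psi> \<psi>' \<Longrightarrow> has_tderiv (\<lambda>q. tadd (\<phi> q) (\<psi> q)) (\<lambda>q. tadd (\<phi>' q) (\<psi>' q))"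
  unfolding has_tderiv_def tadd_def by (auto intro!: derivative_eq_intros)

lemma Dx_eqI: "has_tderiv (\<lambda>q. g (tadd x (tscale q e))) \<phi>' \<Longrightarrow> \<phi>' 0 = y \<Longrightarrow> Dx g x e = y"
  unfolding has_tderiv_def Dx_def by (rule ext)+ (auto intro: DERIV_imp_deriv)

text \<open>Twice differentiable maps, with first and second derivatives given explicitly and
  characterised by the chain rules they satisfy along differentiable curves.\<close>

definition has_derivs2 ::
    "(tensor \<Rightarrow> tensor) \<Rightarrow> (tensor \<Rightarrow> tensor \<Rightarrow> tensor) \<Rightarrow> (tensor \<Rightarrow> tensor \<Rightarrow> tensor \<Rightarrow> tensor) \<Rightarrow> bool" where
  "has_derivs2 g dg d2g \<longleftrightarrow>
    (\<forall>\<phi> \<phi>'. has_tderiv \<phi> \<phi>' \<longrightarrow> has_tderiv (\<lambda>q. g (\<phi> q)) (\<lambda>q. dg (\<phi> q) (\<phi>' q))) \<and>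
    (\<forall>\<phi> \<phi>' \<xi> \<xi>'. has_tderiv \<phi> \<phi>' \<longrightarrow> has_tderiv \<xi> \<xi>' \<longrightarrow>
        has_tderiv (\<lambda>q. dg (\<phi> q) (\<xi> q)) (\<lambda>q. tadd (d2g (\<phi> q) (\<phi>' q) (\<xi> q)) (dg (\<phi> q) (\<xi>' q)))) \<and>
    (\<forall>x. tlinear (dg x)) \<and> (\<forall>x a b. d2g x a b = d2g x b a) \<and> (\<forall>x a. tlinear (d2g x a))"

lemma has_derivs2_chain:
  "has_derivs2 g dg d2g \<Longrightarrow> has_tderiv \<phi> \<phi>' \<Longrightarrow> has_tderiv (\<lambda>q. g (\<phi> q)) (\<lambda>q. dg (\<phi> q) (\<phi>' q))"
  by (simp add: has_derivs2_def)

lemma has_derivs2_chain2: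
  "has_derivs2 g dg d2g \<Longrightarrow> has_tderiv \<phi> \<phi>' \<Longrightarrow> has_tderiv \<xi> \<xi>' \<Longrightarrow>
    has_tderiv (\<lambda>q. dg (\<phi> q) (\<xi> q)) (\<lambda>q. tadd (d2g (\<phi> q) (\<phi>' q) (\<xi> q)) (dg (\<phi> q) (\<xi>' q)))"
  by (simp add: has_derivs2_def)

lemma has_derivs2_tlinear: "has_derivs2 g dg d2g \<Longrightarrow> tlinear (dg x)"
  by (simp add: has_derivs2_def)

lemma has_derivs2_sym: "has_derivs2 g dg d2g \<Longrightarrow> d2g x a b = d2g x b a"
  by (simp add: has_derivs2_def)

lemma has_derivs2_tlinear2: "has_derivs2 g dg d2g \<Longrightarrow> tlinear (d2g x a)"
  by (simp add: has_derivs2_def)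

lemma Dx_has_derivs2: "has_derivs2 g dg d2g \<Longrightarrow> Dx g x e = dg x e"
  by (rule Dx_eqI[OF has_derivs2_chain[OF _ has_tderiv_line]]) simp_all

lemma D2_has_derivs2:
  assumes g: "has_derivs2 g dg d2g"
  shows "D2 g x e e' = d2g x e e'"
proof -
  have "D2 g x e e' = Dx (\<lambda>x'. dg x' e') x e"
    by (simp add: D2_def Dx_has_derivs2[OF g])
  also have "\<dots> = tadd (d2g x e e') (dg x tzero)"
    by (rule Dx_eqI[OF has_derivs2_chain2[OF g has_tderiv_line has_tderiv_const]]) simp
  finally show ?thesis
    by (simp add: tlinear_tzero[OF has_derivs2_tlinear[OF g]])
qed

lemma has_derivs2_id: "has_derivs2 (\<lambda>x. x) (\<lambda>x e. e) (\<lambda>x e e'. tzero)"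
  unfolding has_derivs2_def by (auto intro: has_tderiv_cong tlinearI)

lemma has_derivs2_comp:
  assumes g1: "has_derivs2 g1 dg1 d2g1" and g2: "has_derivs2 g2 dg2 d2g2"
  shows "has_derivs2 (\<lambda>x. g2 (g1 x)) (\<lambda>x e. dg2 (g1 x) (dg1 x e))
     (\<lambda>x e e'. tadd (d2g2 (g1 x) (dg1 x e) (dg1 x e')) (dg2 (g1 x) (d2g1 x e e')))"
  unfolding has_derivs2_def
proof (intro conjI allI impI)
  fix \<phi> \<phi>' assume "has_tderiv \<phi> \<phi>'"
  then show "has_tderiv (\<lambda>q. g2 (g1 (\<phi> q))) (\<lambda>q. dg2 (g1 (\<phi> q)) (dg1 (\<phi> q) (\<phi>' q)))"
    by (intro has_derivs2_chain[OF g2] has_derivs2_chain[OF g1])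
next
  fix \<phi> \<phi>' \<xi> \<xi>' assume \<phi>: "has_tderiv \<phi> \<phi>'" and \<xi>: "has_tderiv \<xi> \<xi>'"
  show "has_tderiv (\<lambda>q. dg2 (g1 (\<phi> q)) (dg1 (\<phi> q) (\<xi> q)))
          (\<lambda>q. tadd (tadd (d2g2 (g1 (\<phi> q)) (dg1 (\<phi> q) (\<phi>' q)) (dg1 (\<phi> q) (\<xi> q)))
                          (dg2 (g1 (\<phi> q)) (d2g1 (\<phi> q) (\<phi>' q) (\<xi> q))))
                    (dg2 (g1 (\<phi> q)) (dg1 (\<phi> q) (\<xi>' q))))"
    using has_derivs2_chain2[OF g2 has_derivs2_chain[OF g1 \<phi>] has_derivs2_chain2[OF g1 \<phi> \<xi>]]
    by (rule has_tderiv_cong) (simp add: tlinear_tadd[OF has_derivs2_tlinear[OF g2]] tadd_assoc)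
next
  fix x show "tlinear (\<lambda>e. dg2 (g1 x) (dg1 x e))"
    using tlinear_comp[OF has_derivs2_tlinear[OF g2] has_derivs2_tlinear[OF g1]] .
next
  fix x a b show "tadd (d2g2 (g1 x) (dg1 x a) (dg1 x b)) (dg2 (g1 x) (d2g1 x a b)) =
       tadd (d2g2 (g1 x) (dg1 x b) (dg1 x a)) (dg2 (g1 x) (d2g1 x b a))"
    by (simp only: has_derivs2_sym[OF g1, of x a] has_derivs2_sym[OF g2, of "g1 x" "dg1 x a"])
next
  fix x a show "tlinear (\<lambda>e. tadd (d2g2 (g1 x) (dg1 x a) (dg1 x e)) (dg2 (g1 x) (d2g1 x a e)))"
    using tlinear_tadd_fun[OF tlinear_comp[OF has_derivs2_tlinear2[OF g2] has_derivs2_tlinear[OF g1]]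
        tlinear_comp[OF has_derivs2_tlinear[OF g2] has_derivs2_tlinear2[OF g1]]] .
qed

text \<open>The same for maps f x \<theta> of a state and a parameter: df x \<theta> dx d\<theta> is the derivative in
  the joint direction (dx, d\<theta>), and d2f the second derivative in two such directions.
  Linearity is only required in the parameter direction.\<close>

definition has_derivs2_param ::
    "(tensor \<Rightarrow> tensor \<Rightarrow> tensor) \<Rightarrow> (tensor \<Rightarrow> tensor \<Rightarrow> tensor \<Rightarrow> tensor \<Rightarrow> tensor)
      \<Rightarrow> (tensor \<Rightarrow> tensor \<Rightarrow> tensor \<Rightarrow> tensor \<Rightarrow> tensor \<Rightarrow> tensor \<Rightarrow> tensor) \<Rightarrow> bool" where
  "has_derivs2_param f df d2f \<longleftrightarrow>
    (\<forall>\<phi> \<phi>' \<psi> \<psi>'. has_tderiv \<phi> \<phi>' \<longrightarrow> has_tderiv \<psi> \<psi>' \<longrightarrow>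
        has_tderiv (\<lambda>q. f (\<phi> q) (\<psi> q)) (\<lambda>q. df (\<phi> q) (\<psi> q) (\<phi>' q) (\<psi>' q))) \<and>
    (\<forall>\<phi> \<phi>' \<psi> \<psi>' \<xi> \<xi>' \<eta> \<eta>'. has_tderiv \<phi> \<phi>' \<longrightarrow> has_tderiv \<psi> \<psi>' \<longrightarrow>
        has_tderiv \<xi> \<xi>' \<longrightarrow> has_tderiv \<eta> \<eta>' \<longrightarrow>
        has_tderiv (\<lambda>q. df (\<phi> q) (\<psi> q) (\<xi> q) (\<eta> q))
          (\<lambda>q. tadd (d2f (\<phi> q) (\<psi> q) (\<phi>' q) (\<psi>' q) (\<xi> q) (\<eta> q)) (df (\<phi> q) (\<psi> q) (\<xi>' q) (\<eta>' q)))) \<and>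
    (\<forall>x \<theta>. tlinear (df x \<theta> tzero)) \<and>
    (\<forall>x \<theta> a \<alpha> b \<beta>. d2f x \<theta> a \<alpha> b \<beta> = d2f x \<theta> b \<beta> a \<alpha>) \<and>
    (\<forall>x \<theta> a \<alpha>. tlinear (d2f x \<theta> a \<alpha> tzero))"

lemma has_derivs2_param_chain:
  assumes "has_derivs2_param f df d2f" "has_tderiv \<phi> \<phi>'" "has_tderiv \<psi> \<psi>'"
  shows "has_tderiv (\<lambda>q. f (\<phi> q) (\<psi> q)) (\<lambda>q. df (\<phi> q) (\<psi> q) (\<phi>' q) (\<psi>' q))"
  using assms(1)[unfolded has_derivs2_param_def, THEN conjunct1, rule_format, OF assms(2,3)] .

lemma has_derivs2_param_chain2:
  assumes "has_derivs2_param f df d2f" "has_tderiv \<phi> \<phi>'" "has_tderiv \<psi> \<psi>'"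
    "has_tderiv \<xi> \<xi>'" "has_tderiv \<eta> \<eta>'"
  shows "has_tderiv (\<lambda>q. df (\<phi> q) (\<psi> q) (\<xi> q) (\<eta> q))
      (\<lambda>q. tadd (d2f (\<phi> q) (\<psi> q) (\<phi>' q) (\<psi>' q) (\<xi> q) (\<eta> q)) (df (\<phi> q) (\<psi> q) (\<xi>' q) (\<eta>' q)))"
  using assms(1)[unfolded has_derivs2_param_def, THEN conjunct2, THEN conjunct1, rule_format,
      OF assms(2-5)] .

lemma has_derivs2_param_tlinear: "has_derivs2_param f df d2f \<Longrightarrow> tlinear (df x \<theta> tzero)"
  unfolding has_derivs2_param_def by blast

lemma has_derivs2_param_sym: "has_derivs2_param f df d2f \<Longrightarrow> d2f x \<theta> a \<alpha> b \<beta> = d2f x \<theta> b \<beta> a \<alpha>"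
  unfolding has_derivs2_param_def by blast

lemma has_derivs2_param_tlinear2: "has_derivs2_param f df d2f \<Longrightarrow> tlinear (d2f x \<theta> a \<alpha> tzero)"
  unfolding has_derivs2_param_def by blast

lemma has_derivs2_param_tzero: "has_derivs2_param f df d2f \<Longrightarrow> df x \<theta> tzero tzero = tzero"
  using has_derivs2_param_tlinear tlinear_tzero by blast

lemma Dth_has_derivs2_param:
  assumes f: "has_derivs2_param f df d2f"
  shows "Dth f x \<theta> u = df x \<theta> tzero u"
  unfolding Dth_def by (rule Dx_eqI[OF has_derivs2_param_chain[OF f has_tderiv_const has_tderiv_line]]) simp

lemma DDth_has_derivs2_param:
  assumes f: "has_derivs2_param f df d2f"
  shows "DDth f x \<theta> e u = d2f x \<theta> e tzero tzero u"
proof -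
  have "DDth f x \<theta> e u = Dx (\<lambda>x'. df x' \<theta> tzero u) x e"
    by (simp add: DDth_def Dth_has_derivs2_param[OF f])
  also have "\<dots> = d2f x \<theta> e tzero tzero u"
    by (rule Dx_eqI[OF has_derivs2_param_chain2[OF f has_tderiv_line has_tderiv_const has_tderiv_const
          has_tderiv_const]]) (simp add: has_derivs2_param_tzero[OF f])
  finally show ?thesis .
qed

lemma Dx_comp_param:
  assumes A: "has_derivs2 A dA d2A" and f: "has_derivs2_param f df d2f"
  shows "Dx (\<lambda>x. f (A x) \<theta>) X V = df (A X) \<theta> (dA X V) tzero"
  by (rule Dx_eqI[OF has_derivs2_param_chain[OF f has_derivs2_chain[OF A has_tderiv_line] has_tderiv_const]])
     simp

lemma DthD_comp_param:
  assumes A: "has_derivs2 A dA d2A" and \<Omega>: "has_derivs2 \<Omega> d\<Omega> d2\<Omega>" and f: "has_derivs2_param f df d2f"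
  shows "DthD (\<lambda>x \<theta>. \<Omega> (f (A x) \<theta>)) X \<theta>0 u V =
    tadd (d2\<Omega> (f (A X) \<theta>0) (df (A X) \<theta>0 tzero u) (df (A X) \<theta>0 (dA X V) tzero))
         (d\<Omega> (f (A X) \<theta>0) (d2f (A X) \<theta>0 tzero u (dA X V) tzero))"
proof -
  have inner: "(\<lambda>\<theta>. Dx (\<lambda>x. \<Omega> (f (A x) \<theta>)) X V) = (\<lambda>\<theta>. d\<Omega> (f (A X) \<theta>) (df (A X) \<theta> (dA X V) tzero))"
    by (rule ext, rule Dx_eqI[OF has_derivs2_chain[OF \<Omega> has_derivs2_param_chain[OF f
          has_derivs2_chain[OF A has_tderiv_line] has_tderiv_const]]]) simp
  show ?thesis
    unfolding DthD_def inner
    by (rule Dx_eqI[OF has_derivs2_chain2[OF \<Omega>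
          has_derivs2_param_chain[OF f has_tderiv_const has_tderiv_line]
          has_derivs2_param_chain2[OF f has_tderiv_const has_tderiv_line has_tderiv_const has_tderiv_const]]])
       (simp add: has_derivs2_param_tzero[OF f])
qed

lemma adjoint_on_DthD_comp_param:
  assumes A: "has_derivs2 A dA d2A" and \<Omega>: "has_derivs2 \<Omega> d\<Omega> d2\<Omega>" and f: "has_derivs2_param f df d2f"
    and df_in: "\<And>x \<theta> a \<alpha>. df x \<theta> a \<alpha> \<in> tbox U"
    and d2f_in: "\<And>x \<theta> a \<alpha> b \<beta>. d2f x \<theta> a \<alpha> b \<beta> \<in> tbox U"
  shows "adjoint_on S T (contr_right (DthD (\<lambda>x \<theta>. \<Omega> (f (A x) \<theta>)) X \<theta>0) V) y =
    tadd (adjoint_on S U (Dth f (A X) \<theta>0)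
            (adjoint_on U T (contr_left (Dx (\<lambda>x. f (A x) \<theta>0) X V) (D2 \<Omega> (f (A X) \<theta>0))) y))
         (adjoint_on S U (contr_left (Dx A X V) (DDth f (A X) \<theta>0))
            (adjoint_on U T (Dx \<Omega> (f (A X) \<theta>0)) y))"
proof -
  define x0 where "x0 = A X"
  define x1 where "x1 = f x0 \<theta>0"
  define w where "w = dA X V"
  define e where "e = df x0 \<theta>0 w tzero"
  txt \<open>The symmetry of d2\<Omega> and d2f brings the mixed derivative into the shape of the claim.\<close>
  have DthD: "contr_right (DthD (\<lambda>x \<theta>. \<Omega> (f (A x) \<theta>)) X \<theta>0) V
      = (\<lambda>u. tadd (d2\<Omega> x1 e (df x0 \<theta>0 tzero u)) (d\<Omega> x1 (d2f x0 \<theta>0 w tzero tzero u)))"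
    unfolding contr_right_def DthD_comp_param[OF A \<Omega> f] x0_def x1_def w_def e_def
    by (intro ext) (simp only: has_derivs2_sym[OF \<Omega>, of _ "df _ _ tzero _"]
        has_derivs2_param_sym[OF f, of _ _ tzero _ "dA X V" tzero])
  have Dth: "Dth f (A X) \<theta>0 = df x0 \<theta>0 tzero"
    by (auto simp: x0_def Dth_has_derivs2_param[OF f])
  have D2: "contr_left (Dx (\<lambda>x. f (A x) \<theta>0) X V) (D2 \<Omega> (f (A X) \<theta>0)) = d2\<Omega> x1 e"
    by (auto simp: contr_left_def x0_def x1_def e_def w_def Dx_comp_param[OF A f] D2_has_derivs2[OF \<Omega>])
  have DDth: "contr_left (Dx A X V) (DDth f (A X) \<theta>0) = d2f x0 \<theta>0 w tzero tzero"
    by (auto simp: contr_left_def x0_def w_def Dx_has_derivs2[OF A] DDth_has_derivs2_param[OF f])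
  have Dx: "Dx \<Omega> (f (A X) \<theta>0) = d\<Omega> x1"
    by (auto simp: x0_def x1_def Dx_has_derivs2[OF \<Omega>])
  show ?thesis
    unfolding DthD Dth D2 DDth Dx
    by (simp only: adjoint_on_tadd[OF
          tlinear_comp[OF has_derivs2_tlinear2[OF \<Omega>] has_derivs2_param_tlinear[OF f]]
          tlinear_comp[OF has_derivs2_tlinear[OF \<Omega>] has_derivs2_param_tlinear2[OF f]]]
        adjoint_on_comp[OF has_derivs2_tlinear2[OF \<Omega>] has_derivs2_param_tlinear[OF f] df_in]
        adjoint_on_comp[OF has_derivs2_tlinear[OF \<Omega>] has_derivs2_param_tlinear2[OF f] d2f_in])
qed

section \<open>Derivatives of a convolutional layer\<close>

definition act_deriv :: "cnn_arch \<Rightarrow> nat \<Rightarrow> real \<Rightarrow> real" where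
  "act_deriv N s = deriv (act N s)"

definition act_deriv2 :: "cnn_arch \<Rightarrow> nat \<Rightarrow> real \<Rightarrow> real" where
  "act_deriv2 N s = deriv (act_deriv N s)"

lemma has_real_derivative_act:
  assumes "twice_cont_diff (act N s)"
  shows "(act N s has_real_derivative act_deriv N s y) (at y)"
    and "(act_deriv N s has_real_derivative act_deriv2 N s y) (at y)"
proof -
  obtain g' g'' where g': "\<forall>x. (act N s has_real_derivative g' x) (at x)"
    and g'': "\<forall>x. (g' has_real_derivative g'' x) (at x)"
    using assms unfolding twice_cont_diff_def by blast
  have "act_deriv N s = g'" using g' by (auto simp: act_deriv_def intro!: DERIV_imp_deriv)
  moreover have "act_deriv2 N s = g''"
    using g'' by (auto simp: act_deriv2_def \<open>act_deriv N s = g'\<close> intro!: DERIV_imp_deriv)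
  ultimately show "(act N s has_real_derivative act_deriv N s y) (at y)"
    and "(act_deriv N s has_real_derivative act_deriv2 N s y) (at y)"
    using g' g'' by simp_all
qed

lemma DERIV_if_zero:
  "(c \<Longrightarrow> (f has_real_derivative f') (at q)) \<Longrightarrow>
    ((\<lambda>q. if c then f q else 0) has_real_derivative (if c then f' else 0)) (at q)"
  by (cases c) auto

definition Smap_deriv :: "cnn_arch \<Rightarrow> nat \<Rightarrow> tensor \<Rightarrow> tensor \<Rightarrow> tensor" where
  "Smap_deriv N s Y E = (\<lambda>j k a.
     if j \<in> {1..rows_bar N s} \<and> k \<in> {1..cols_bar N s} \<and> a \<in> {1..chans N (Suc s)}
     then act_deriv N s (Y j k a) * E j k a else 0)"

definition Smap_deriv2 :: "cnn_arch \<Rightarrow> nat \<Rightarrow> tensor \<Rightarrow> tensor \<Rightarrow> tensor \<Rightarrow> tensor" where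
  "Smap_deriv2 N s Y E E' = (\<lambda>j k a.
     if j \<in> {1..rows_bar N s} \<and> k \<in> {1..cols_bar N s} \<and> a \<in> {1..chans N (Suc s)}
     then act_deriv2 N s (Y j k a) * E j k a * E' j k a else 0)"

lemma has_tderiv_Psimap:
  "has_tderiv \<phi> \<phi>' \<Longrightarrow> has_tderiv (\<lambda>q. Psimap N s (\<phi> q)) (\<lambda>q. Psimap N s (\<phi>' q))"
  unfolding has_tderiv_def Psimap_def by (auto intro!: DERIV_if_zero DERIV_sum DERIV_cmult)

lemma has_tderiv_Smap:
  "twice_cont_diff (act N s) \<Longrightarrow> has_tderiv \<phi> \<phi>' \<Longrightarrow>
    has_tderiv (\<lambda>q. Smap N s (\<phi> q)) (\<lambda>q. Smap_deriv N s (\<phi> q) (\<phi>' q))"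
  unfolding has_tderiv_def Smap_def Smap_deriv_def
  by (auto intro!: DERIV_if_zero DERIV_chain2[OF has_real_derivative_act(1)])

lemma has_tderiv_Smap_deriv:
  assumes act: "twice_cont_diff (act N s)" and \<phi>: "has_tderiv \<phi> \<phi>'" and \<xi>: "has_tderiv \<xi> \<xi>'"
  shows "has_tderiv (\<lambda>q. Smap_deriv N s (\<phi> q) (\<xi> q))
           (\<lambda>q. tadd (Smap_deriv2 N s (\<phi> q) (\<phi>' q) (\<xi> q)) (Smap_deriv N s (\<phi> q) (\<xi>' q)))"
  unfolding has_tderiv_def Smap_deriv_def Smap_deriv2_def tadd_def
proof (intro allI)
  fix q j k a
  have "((\<lambda>q. act_deriv N s (\<phi> q j k a) * \<xi> q j k a) has_real_derivative
          act_deriv2 N s (\<phi> q j k a) * \<phi>' q j k a * \<xi> q j k a + act_deriv N s (\<phi> q j k a) * \<xi>' q j k a) (at q)"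
    using \<phi> \<xi> unfolding has_tderiv_def
    by (intro DERIV_cong[OF DERIV_mult[OF DERIV_chain2[OF has_real_derivative_act(2)[OF act]]]])
       (auto simp: algebra_simps)
  from DERIV_if_zero[OF this]
  show "((\<lambda>q. if j \<in> {1..rows_bar N s} \<and> k \<in> {1..cols_bar N s} \<and> a \<in> {1..chans N (Suc s)}
                then act_deriv N s (\<phi> q j k a) * \<xi> q j k a else 0) has_real_derivative
          (if j \<in> {1..rows_bar N s} \<and> k \<in> {1..cols_bar N s} \<and> a \<in> {1..chans N (Suc s)}
           then act_deriv2 N s (\<phi> q j k a) * \<phi>' q j k a * \<xi> q j k a else 0) +
          (if j \<in> {1..rows_bar N s} \<and> k \<in> {1..cols_bar N s} \<and> a \<in> {1..chans N (Suc s)}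
           then act_deriv N s (\<phi> q j k a) * \<xi>' q j k a else 0)) (at q)"
    by (rule DERIV_cong) simp
qed

lemma conv_eq: "conv N t Wt X = (\<lambda>j k a.
     if j \<in> {1..rows_bar N t} \<and> k \<in> {1..cols_bar N t} \<and> a \<in> {1..chans N (Suc t)} then
       (\<Sum>r\<in>{1..ker_rows N t}. \<Sum>s\<in>{1..ker_cols N t}. Wt r s a *
          (\<Sum>i\<in>{1..chans N t}. mix N t a i *
             X (1 + (j - 1) * stride N t + r - 1) (1 + (k - 1) * stride N t + s - 1) i))
     else 0)"
  unfolding conv_def mat_inner_def Phi_def Kcrop_def kappa_def
  by (intro ext) (auto intro!: sum.cong)

lemma has_tderiv_conv:
  assumes \<omega>: "has_tderiv \<omega> \<omega>'" and \<phi>: "has_tderiv \<phi> \<phi>'"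
  shows "has_tderiv (\<lambda>q. conv N t (\<omega> q) (\<phi> q))
           (\<lambda>q. tadd (conv N t (\<omega>' q) (\<phi> q)) (conv N t (\<omega> q) (\<phi>' q)))"
  unfolding has_tderiv_def conv_eq tadd_def
proof (intro allI)
  fix q j k a
  define P where "P X r s = (\<Sum>i\<in>{1..chans N t}. mix N t a i *
      X (1 + (j - 1) * stride N t + r - 1) (1 + (k - 1) * stride N t + s - 1) i)" for X r s
  have "((\<lambda>q. P (\<phi> q) r s) has_real_derivative P (\<phi>' q) r s) (at q)" for r s
    using \<phi> unfolding P_def has_tderiv_def by (intro DERIV_sum DERIV_cmult) auto
  then have "((\<lambda>q. \<Sum>r\<in>{1..ker_rows N t}. \<Sum>s\<in>{1..ker_cols N t}. \<omega> q r s a * P (\<phi> q) r s)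
      has_real_derivative (\<Sum>r\<in>{1..ker_rows N t}. \<Sum>s\<in>{1..ker_cols N t}.
          \<omega>' q r s a * P (\<phi> q) r s + P (\<phi>' q) r s * \<omega> q r s a)) (at q)"
    using \<omega> unfolding has_tderiv_def by (intro DERIV_sum DERIV_mult) auto
  from DERIV_if_zero[OF this]
  show "((\<lambda>q. if j \<in> {1..rows_bar N t} \<and> k \<in> {1..cols_bar N t} \<and> a \<in> {1..chans N (Suc t)}
          then \<Sum>r\<in>{1..ker_rows N t}. \<Sum>s\<in>{1..ker_cols N t}. \<omega> q r s a * P (\<phi> q) r s else 0)
      has_real_derivative
        (if j \<in> {1..rows_bar N t} \<and> k \<in> {1..cols_bar N t} \<and> a \<in> {1..chans N (Suc t)}
         then \<Sum>r\<in>{1..ker_rows N t}. \<Sum>s\<in>{1..ker_cols N t}. \<omega>' q r s a * P (\<phi> q) r s else 0) +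
        (if j \<in> {1..rows_bar N t} \<and> k \<in> {1..cols_bar N t} \<and> a \<in> {1..chans N (Suc t)}
         then \<Sum>r\<in>{1..ker_rows N t}. \<Sum>s\<in>{1..ker_cols N t}. \<omega> q r s a * P (\<phi>' q) r s else 0)) (at q)"
    by (rule DERIV_cong) (simp add: sum.distrib mult.commute)
qed

lemma tlinear_Psimap: "tlinear (Psimap N s)"
  by (rule tlinearI)
     (auto simp: fun_eq_iff Psimap_def tadd_def tscale_def distrib_left sum.distrib sum_distrib_left
        mult.left_commute)

lemma tlinear_Smap_deriv: "tlinear (Smap_deriv N s Y)"
  by (rule tlinearI) (auto simp: fun_eq_iff Smap_deriv_def tadd_def tscale_def distrib_left mult.left_commute)

lemma Smap_deriv2_sym: "Smap_deriv2 N s Y E E' = Smap_deriv2 N s Y E' E"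
  unfolding Smap_deriv2_def by (auto simp: fun_eq_iff mult_ac)

lemma tlinear_Smap_deriv2: "tlinear (Smap_deriv2 N s Y E)"
  by (rule tlinearI) (auto simp: fun_eq_iff Smap_deriv2_def tadd_def tscale_def algebra_simps)

lemma tlinear_conv_kernel: "tlinear (\<lambda>Wt. conv N t Wt X)"
  by (rule tlinearI)
     (auto simp: fun_eq_iff conv_eq tadd_def tscale_def distrib_right sum.distrib sum_distrib_left mult.assoc)

lemma tlinear_conv: "tlinear (conv N t Wt)"
  by (rule tlinearI)
     (auto simp: fun_eq_iff conv_eq tadd_def tscale_def distrib_left sum.distrib sum_distrib_left
        mult.left_commute)

text \<open>Derivatives of a layer jointly in kernel, bias and state; the three directions are passed
  in this order.\<close>

definition preact_deriv :: "cnn_arch \<Rightarrow> nat \<Rightarrow> tensor \<Rightarrow> tensor \<Rightarrow> tensor \<Rightarrow> tensor \<Rightarrow> tensor \<Rightarrow> tensor" where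
  "preact_deriv N s Wt X dW dB dX = tadd (tadd (conv N s dW X) (conv N s Wt dX)) dB"

definition layer_deriv ::
    "cnn_arch \<Rightarrow> nat \<Rightarrow> tensor \<Rightarrow> tensor \<Rightarrow> tensor \<Rightarrow> tensor \<Rightarrow> tensor \<Rightarrow> tensor \<Rightarrow> tensor" where
  "layer_deriv N s Wt Bt X dW dB dX =
     Psimap N s (Smap_deriv N s (tadd (conv N s Wt X) Bt) (preact_deriv N s Wt X dW dB dX))"

definition layer_deriv2 :: "cnn_arch \<Rightarrow> nat \<Rightarrow> tensor \<Rightarrow> tensor \<Rightarrow> tensor
    \<Rightarrow> tensor \<Rightarrow> tensor \<Rightarrow> tensor \<Rightarrow> tensor \<Rightarrow> tensor \<Rightarrow> tensor \<Rightarrow> tensor" where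
  "layer_deriv2 N s Wt Bt X aW aB aX bW bB bX = Psimap N s (tadd
      (Smap_deriv2 N s (tadd (conv N s Wt X) Bt)
         (preact_deriv N s Wt X aW aB aX) (preact_deriv N s Wt X bW bB bX))
      (Smap_deriv N s (tadd (conv N s Wt X) Bt) (tadd (conv N s aW bX) (conv N s bW aX))))"

lemma preact_deriv_tadd:
  "preact_deriv N s Wt X (tadd aW bW) (tadd aB bB) (tadd aX bX) =
     tadd (preact_deriv N s Wt X aW aB aX) (preact_deriv N s Wt X bW bB bX)"
  unfolding preact_deriv_def
  by (simp add: tlinear_tadd[OF tlinear_conv] tlinear_tadd[OF tlinear_conv_kernel] tadd_ac)

lemma preact_deriv_tscale:
  "preact_deriv N s Wt X (tscale c aW) (tscale c aB) (tscale c aX) = tscale c (preact_deriv N s Wt X aW aB aX)"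
  unfolding preact_deriv_def
  by (simp add: tlinear_tscale[OF tlinear_conv] tlinear_tscale[OF tlinear_conv_kernel] tscale_tadd)

lemma layer_deriv_tadd:
  "layer_deriv N s Wt Bt X (tadd aW bW) (tadd aB bB) (tadd aX bX) =
     tadd (layer_deriv N s Wt Bt X aW aB aX) (layer_deriv N s Wt Bt X bW bB bX)"
  unfolding layer_deriv_def
  by (simp add: preact_deriv_tadd tlinear_tadd[OF tlinear_Smap_deriv] tlinear_tadd[OF tlinear_Psimap])

lemma layer_deriv_tscale:
  "layer_deriv N s Wt Bt X (tscale c aW) (tscale c aB) (tscale c aX) =
     tscale c (layer_deriv N s Wt Bt X aW aB aX)"
  unfolding layer_deriv_def
  by (simp add: preact_deriv_tscale tlinear_tscale[OF tlinear_Smap_deriv] tlinear_tscale[OF tlinear_Psimap])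

lemma layer_deriv2_sym:
  "layer_deriv2 N s Wt Bt X aW aB aX bW bB bX = layer_deriv2 N s Wt Bt X bW bB bX aW aB aX"
  unfolding layer_deriv2_def by (simp add: Smap_deriv2_sym tadd_commute)

lemma layer_deriv2_tadd:
  "layer_deriv2 N s Wt Bt X aW aB aX (tadd bW cW) (tadd bB cB) (tadd bX cX) =
     tadd (layer_deriv2 N s Wt Bt X aW aB aX bW bB bX) (layer_deriv2 N s Wt Bt X aW aB aX cW cB cX)"
  unfolding layer_deriv2_def
  by (simp add: preact_deriv_tadd tlinear_tadd[OF tlinear_Smap_deriv2] tlinear_tadd[OF tlinear_Smap_deriv]
      tlinear_tadd[OF tlinear_conv] tlinear_tadd[OF tlinear_conv_kernel] tlinear_tadd[OF tlinear_Psimap] tadd_ac)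

lemma layer_deriv2_tscale:
  "layer_deriv2 N s Wt Bt X aW aB aX (tscale c bW) (tscale c bB) (tscale c bX) =
     tscale c (layer_deriv2 N s Wt Bt X aW aB aX bW bB bX)"
  unfolding layer_deriv2_def
  by (simp add: preact_deriv_tscale tlinear_tscale[OF tlinear_Smap_deriv2] tlinear_tscale[OF tlinear_Smap_deriv]
      tlinear_tscale[OF tlinear_conv] tlinear_tscale[OF tlinear_conv_kernel] tlinear_tscale[OF tlinear_Psimap]
      tscale_tadd[symmetric])

lemma has_tderiv_preact:
  "has_tderiv \<omega> \<omega>' \<Longrightarrow> has_tderiv \<beta> \<beta>' \<Longrightarrow> has_tderiv \<phi> \<phi>' \<Longrightarrow>
    has_tderiv (\<lambda>q. tadd (conv N s (\<omega> q) (\<phi> q)) (\<beta> q))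
      (\<lambda>q. preact_deriv N s (\<omega> q) (\<phi> q) (\<omega>' q) (\<beta>' q) (\<phi>' q))"
  unfolding preact_deriv_def by (intro has_tderiv_tadd has_tderiv_conv)

lemma has_tderiv_layer:
  assumes "twice_cont_diff (act N s)"
    and "has_tderiv \<omega> \<omega>'" "has_tderiv \<beta> \<beta>'" "has_tderiv \<phi> \<phi>'"
  shows "has_tderiv (\<lambda>q. layer N s (\<omega> q) (\<beta> q) (\<phi> q))
           (\<lambda>q. layer_deriv N s (\<omega> q) (\<beta> q) (\<phi> q) (\<omega>' q) (\<beta>' q) (\<phi>' q))"
  unfolding layer_def layer_deriv_def
  using assms by (intro has_tderiv_Psimap has_tderiv_Smap has_tderiv_preact)

lemma has_tderiv_layer_deriv:
  assumes act: "twice_cont_diff (act N s)"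
    and \<omega>: "has_tderiv \<omega> \<omega>'" and \<beta>: "has_tderiv \<beta> \<beta>'" and \<phi>: "has_tderiv \<phi> \<phi>'"
    and \<xi>: "has_tderiv \<xi>W \<xi>W'" "has_tderiv \<xi>B \<xi>B'" "has_tderiv \<xi>X \<xi>X'"
  shows "has_tderiv (\<lambda>q. layer_deriv N s (\<omega> q) (\<beta> q) (\<phi> q) (\<xi>W q) (\<xi>B q) (\<xi>X q))
    (\<lambda>q. tadd (layer_deriv2 N s (\<omega> q) (\<beta> q) (\<phi> q) (\<omega>' q) (\<beta>' q) (\<phi>' q) (\<xi>W q) (\<xi>B q) (\<xi>X q))
              (layer_deriv N s (\<omega> q) (\<beta> q) (\<phi> q) (\<xi>W' q) (\<xi>B' q) (\<xi>X' q)))"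
proof -
  have "has_tderiv (\<lambda>q. preact_deriv N s (\<omega> q) (\<phi> q) (\<xi>W q) (\<xi>B q) (\<xi>X q))
     (\<lambda>q. tadd (tadd (tadd (conv N s (\<xi>W' q) (\<phi> q)) (conv N s (\<xi>W q) (\<phi>' q)))
                     (tadd (conv N s (\<omega>' q) (\<xi>X q)) (conv N s (\<omega> q) (\<xi>X' q)))) (\<xi>B' q))"
    unfolding preact_deriv_def using \<omega> \<phi> \<xi> by (intro has_tderiv_tadd has_tderiv_conv)
  from has_tderiv_Psimap[OF has_tderiv_Smap_deriv[OF act has_tderiv_preact[OF \<omega> \<beta> \<phi>] this]]
  show ?thesis
    unfolding layer_deriv_def
    by (rule has_tderiv_cong)
       (simp add: layer_deriv2_def layer_deriv_def preact_deriv_def tlinear_tadd[OF tlinear_Psimap]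
         tlinear_tadd[OF tlinear_Smap_deriv] tadd_ac)
qed

lemma tlinear_layer_deriv:
  assumes "tlinear fW" "tlinear fB" "tlinear fX"
  shows "tlinear (\<lambda>u. layer_deriv N s Wt Bt x (fW u) (fB u) (fX u))"
  using assms
  by (intro tlinearI) (simp_all add: tlinear_tadd tlinear_tscale layer_deriv_tadd layer_deriv_tscale)

lemma tlinear_layer_deriv2:
  assumes "tlinear fW" "tlinear fB" "tlinear fX"
  shows "tlinear (\<lambda>u. layer_deriv2 N s Wt Bt x aW aB aX (fW u) (fB u) (fX u))"
  using assms
  by (intro tlinearI) (simp_all add: tlinear_tadd tlinear_tscale layer_deriv2_tadd layer_deriv2_tscale)

lemma has_derivs2_layer:
  assumes act: "twice_cont_diff (act N s)"
  shows "has_derivs2 (layer N s Wt Bt) (\<lambda>x e. layer_deriv N s Wt Bt x tzero tzero e)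
           (\<lambda>x e e'. layer_deriv2 N s Wt Bt x tzero tzero e tzero tzero e')"
  unfolding has_derivs2_def
proof (intro conjI allI impI)
  fix \<phi> \<phi>' assume "has_tderiv \<phi> \<phi>'"
  then show "has_tderiv (\<lambda>q. layer N s Wt Bt (\<phi> q)) (\<lambda>q. layer_deriv N s Wt Bt (\<phi> q) tzero tzero (\<phi>' q))"
    by (intro has_tderiv_layer[OF act has_tderiv_const has_tderiv_const])
next
  fix \<phi> \<phi>' \<xi> \<xi>' assume "has_tderiv \<phi> \<phi>'" "has_tderiv \<xi> \<xi>'"
  then show "has_tderiv (\<lambda>q. layer_deriv N s Wt Bt (\<phi> q) tzero tzero (\<xi> q))
      (\<lambda>q. tadd (layer_deriv2 N s Wt Bt (\<phi> q) tzero tzero (\<phi>' q) tzero tzero (\<xi> q))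
                (layer_deriv N s Wt Bt (\<phi> q) tzero tzero (\<xi>' q)))"
    by (intro has_tderiv_layer_deriv[OF act has_tderiv_const has_tderiv_const _ has_tderiv_const has_tderiv_const])
next
  fix x show "tlinear (layer_deriv N s Wt Bt x tzero tzero)"
    using tlinear_layer_deriv[OF tlinear_zero tlinear_zero tlinear_id] .
next
  fix x a show "tlinear (layer_deriv2 N s Wt Bt x tzero tzero a tzero tzero)"
    using tlinear_layer_deriv2[OF tlinear_zero tlinear_zero tlinear_id] .
qed (rule layer_deriv2_sym)

definition layer_param_deriv ::
    "cnn_arch \<Rightarrow> (nat \<Rightarrow> tensor) \<Rightarrow> (nat \<Rightarrow> tensor) \<Rightarrow> nat \<Rightarrow> bool
      \<Rightarrow> tensor \<Rightarrow> tensor \<Rightarrow> tensor \<Rightarrow> tensor \<Rightarrow> tensor" where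
  "layer_param_deriv N W B t isW = (\<lambda>x \<theta> dx d\<theta>.
     if isW then layer_deriv N t \<theta> (B t) x d\<theta> tzero dx else layer_deriv N t (W t) \<theta> x tzero d\<theta> dx)"

definition layer_param_deriv2 ::
    "cnn_arch \<Rightarrow> (nat \<Rightarrow> tensor) \<Rightarrow> (nat \<Rightarrow> tensor) \<Rightarrow> nat \<Rightarrow> bool
      \<Rightarrow> tensor \<Rightarrow> tensor \<Rightarrow> tensor \<Rightarrow> tensor \<Rightarrow> tensor \<Rightarrow> tensor \<Rightarrow> tensor" where
  "layer_param_deriv2 N W B t isW = (\<lambda>x \<theta> ax a\<theta> bx b\<theta>.
     if isW then layer_deriv2 N t \<theta> (B t) x a\<theta> tzero ax b\<theta> tzero bx
     else layer_deriv2 N t (W t) \<theta> x tzero a\<theta> ax tzero b\<theta> bx)"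

lemma has_derivs2_param_layer_param:
  assumes act: "twice_cont_diff (act N t)"
  shows "has_derivs2_param (layer_param N W B t isW) (layer_param_deriv N W B t isW)
           (layer_param_deriv2 N W B t isW)"
  unfolding has_derivs2_param_def
proof (intro conjI allI impI)
  fix \<phi> \<phi>' \<psi> \<psi>' assume "has_tderiv \<phi> \<phi>'" "has_tderiv \<psi> \<psi>'"
  then show "has_tderiv (\<lambda>q. layer_param N W B t isW (\<phi> q) (\<psi> q))
      (\<lambda>q. layer_param_deriv N W B t isW (\<phi> q) (\<psi> q) (\<phi>' q) (\<psi>' q))"
    unfolding layer_param_def layer_param_deriv_def
    by (cases isW) (simp_all add: has_tderiv_layer[OF act] has_tderiv_const)
next
  fix \<phi> \<phi>' \<psi> \<psi>' \<xi> \<xi>' \<eta> \<eta>'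
  assume "has_tderiv \<phi> \<phi>'" "has_tderiv \<psi> \<psi>'" "has_tderiv \<xi> \<xi>'" "has_tderiv \<eta> \<eta>'"
  then show "has_tderiv (\<lambda>q. layer_param_deriv N W B t isW (\<phi> q) (\<psi> q) (\<xi> q) (\<eta> q))
      (\<lambda>q. tadd (layer_param_deriv2 N W B t isW (\<phi> q) (\<psi> q) (\<phi>' q) (\<psi>' q) (\<xi> q) (\<eta> q))
                (layer_param_deriv N W B t isW (\<phi> q) (\<psi> q) (\<xi>' q) (\<eta>' q)))"
    unfolding layer_param_deriv_def layer_param_deriv2_def
    by (cases isW) (simp_all add: has_tderiv_layer_deriv[OF act] has_tderiv_const)
next
  fix x \<theta> show "tlinear (layer_param_deriv N W B t isW x \<theta> tzero)"
    unfolding layer_param_deriv_def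
    using tlinear_layer_deriv[OF tlinear_id tlinear_zero tlinear_zero]
      tlinear_layer_deriv[OF tlinear_zero tlinear_id tlinear_zero] by (cases isW) simp_all
next
  fix x \<theta> a \<alpha> show "tlinear (layer_param_deriv2 N W B t isW x \<theta> a \<alpha> tzero)"
    unfolding layer_param_deriv2_def
    using tlinear_layer_deriv2[OF tlinear_id tlinear_zero tlinear_zero]
      tlinear_layer_deriv2[OF tlinear_zero tlinear_id tlinear_zero] by (cases isW) simp_all
qed (simp add: layer_param_deriv2_def layer_deriv2_sym)

lemma Psimap_in_tbox: "Psimap N s Y \<in> tbox (sdims N (Suc s))"
  unfolding Psimap_def sdims_def tbox_def by auto

lemma layer_param_deriv_in_tbox: "layer_param_deriv N W B t isW x \<theta> dx d\<theta> \<in> tbox (sdims N (Suc t))"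
  unfolding layer_param_deriv_def layer_deriv_def by (simp add: Psimap_in_tbox)

lemma layer_param_deriv2_in_tbox:
  "layer_param_deriv2 N W B t isW x \<theta> ax a\<theta> bx b\<theta> \<in> tbox (sdims N (Suc t))"
  unfolding layer_param_deriv2_def layer_deriv2_def by (simp add: Psimap_in_tbox)

section \<open>The network\<close>

lemma comp_layers_Suc:
  "a \<le> b \<Longrightarrow> comp_layers N W B a (Suc b) = (\<lambda>x. layer N b (W b) (B b) (comp_layers N W B a b x))"
  unfolding comp_layers_def by auto

lemma comp_layers_empty: "b \<le> a \<Longrightarrow> comp_layers N W B a b = (\<lambda>x. x)"
  unfolding comp_layers_def by auto

lemma comp_layers_split:
  assumes "a \<le> t" "t < b"
  shows "comp_layers N W B a b x =
           comp_layers N W B (Suc t) b (layer N t (W t) (B t) (comp_layers N W B a t x))"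
proof -
  have "[a..<b] = [a..<t] @ t # [Suc t..<b]"
    using assms by (metis le_add_diff_inverse less_imp_le upt_add_eq_append upt_conv_Cons)
  then show ?thesis unfolding comp_layers_def by simp
qed

lemma comp_layers_cong:
  "(\<And>s. s \<in> {a..<b} \<Longrightarrow> W' s = W s \<and> B' s = B s) \<Longrightarrow> comp_layers N W' B' a b = comp_layers N W B a b"
  unfolding comp_layers_def by (intro ext foldl_cong) auto

lemma has_derivs2_comp_layers:
  "\<forall>s\<in>{a..<b}. twice_cont_diff (act N s) \<Longrightarrow> \<exists>dg d2g. has_derivs2 (comp_layers N W B a b) dg d2g"
proof (induction b)
  case 0
  then show ?case using has_derivs2_id by (auto simp: comp_layers_empty)
next
  case (Suc b)
  show ?case
  proof (cases "a \<le> b")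
    case True
    with Suc obtain dg d2g where g: "has_derivs2 (comp_layers N W B a b) dg d2g" by auto
    have "twice_cont_diff (act N b)" using Suc.prems True by auto
    from has_derivs2_comp[OF g has_derivs2_layer[OF this]] show ?thesis
      unfolding comp_layers_Suc[OF True] by blast
  next
    case False
    then show ?thesis using has_derivs2_id by (auto simp: comp_layers_empty)
  qed
qed

lemma alpha_eq_layer_param:
  assumes "1 \<le> t"
  shows "alpha N W B t = (\<lambda>x. layer_param N W B t isW (alpha N W B (t - 1) x) (theta_val W B t isW))"
proof -
  have "alpha N W B t x = layer N t (W t) (B t) (alpha N W B (t - 1) x)" for x
    using comp_layers_split[of 1 t "Suc t" N W B x] assms
    by (simp add: alpha_def comp_layers_empty)
  then show ?thesis
    by (auto simp: layer_param_def theta_val_def)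
qed

lemma network_param_eq_comp:
  assumes "t \<in> {1..L}"
  shows "network_param N L W B t isW =
           (\<lambda>x \<theta>. omega N L W B (Suc t) (layer_param N W B t isW (alpha N W B (t - 1) x) \<theta>))"
proof -
  have split: "network N L W' B' x = omega N L W B (Suc t) (layer N t (W' t) (B' t) (alpha N W B (t - 1) x))"
    if "\<And>s. s \<noteq> t \<Longrightarrow> W' s = W s \<and> B' s = B s" for W' B' x
  proof -
    have "comp_layers N W' B' (Suc t) (Suc L) = comp_layers N W B (Suc t) (Suc L)"
      "comp_layers N W' B' 1 t = comp_layers N W B 1 t"
      using that by (auto intro!: comp_layers_cong)
    then show ?thesis
      using comp_layers_split[of 1 t "Suc L" N W' B' x] assms
      by (simp add: network_def omega_def alpha_def)
  qed
  show ?thesis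
  proof (rule ext, rule ext)
    fix x \<theta>
    show "network_param N L W B t isW x \<theta> =
        omega N L W B (Suc t) (layer_param N W B t isW (alpha N W B (t - 1) x) \<theta>)"
      using split[of "W(t := \<theta>)" B x] split[of W "B(t := \<theta>)" x]
      by (simp add: network_param_def layer_param_def)
  qed
qed

theorem theorem11:
  fixes N :: cnn_arch and L t :: nat and W B :: "nat \<Rightarrow> tensor"
    and X V Y :: tensor and isW :: bool
  assumes act_C2: "\<forall>s\<in>{1..L}. twice_cont_diff (act N s)"
    and stride_pos: "\<forall>s\<in>{1..L}. stride N s \<ge> 1"
    and crops_rows: "\<forall>s\<in>{1..L}. \<forall>j\<in>{1..rows_bar N s}.
                       1 + (j - 1) * stride N s + ker_rows N s - 1 \<le> rows N s"
    and crops_cols: "\<forall>s\<in>{1..L}. \<forall>k\<in>{1..cols_bar N s}.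
                       1 + (k - 1) * stride N s + ker_cols N s - 1 \<le> cols N s"
    and W_in: "\<forall>s\<in>{1..L}. W s \<in> tbox (ker_rows N s, ker_cols N s, chans N (Suc s))"
    and B_in: "\<forall>s\<in>{1..L}. B s \<in> tbox (rows_bar N s, cols_bar N s, chans N (Suc s))"
    and t_range: "t \<in> {1..L}"
    and X_in: "X \<in> tbox (sdims N 1)"
    and V_in: "V \<in> tbox (sdims N 1)"
    and Y_in: "Y \<in> tbox (sdims N (Suc L))"
  shows "adjoint_on (theta_dims N t isW) (sdims N (Suc L))
           (contr_right (DthD (network_param N L W B t isW) X (theta_val W B t isW)) V) Y
       = tadd
           (adjoint_on (theta_dims N t isW) (sdims N (Suc t))
              (Dth (layer_param N W B t isW) (alpha N W B (t - 1) X) (theta_val W B t isW))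
              (adjoint_on (sdims N (Suc t)) (sdims N (Suc L))
                 (contr_left (Dx (alpha N W B t) X V)
                    (D2 (omega N L W B (Suc t)) (alpha N W B t X))) Y))
           (adjoint_on (theta_dims N t isW) (sdims N (Suc t))
              (contr_left (Dx (alpha N W B (t - 1)) X V)
                 (DDth (layer_param N W B t isW) (alpha N W B (t - 1) X) (theta_val W B t isW)))
              (adjoint_on (sdims N (Suc t)) (sdims N (Suc L))
                 (Dx (omega N L W B (Suc t)) (alpha N W B t X)) Y))"
proof -
  have t: "1 \<le> t" "t \<le> L" using t_range by auto
  obtain dA d2A where A: "has_derivs2 (alpha N W B (t - 1)) dA d2A"
    using has_derivs2_comp_layers[of 1 t N W B] act_C2 t by (auto simp: alpha_def)
  obtain d\<Omega> d2\<Omega> where \<Omega>: "has_derivs2 (omega N L W B (Suc t)) d\<Omega> d2\<Omega>"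
    using has_derivs2_comp_layers[of "Suc t" "Suc L" N W B] act_C2 by (auto simp: omega_def)
  have f: "has_derivs2_param (layer_param N W B t isW) (layer_param_deriv N W B t isW)
             (layer_param_deriv2 N W B t isW)"
    using act_C2 t_range by (intro has_derivs2_param_layer_param) blast
  show ?thesis
    unfolding network_param_eq_comp[OF t_range] alpha_eq_layer_param[OF t(1), of N W B isW]
    by (rule adjoint_on_DthD_comp_param[OF A \<Omega> f layer_param_deriv_in_tbox layer_param_deriv2_in_tbox])
qed

end
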